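(* Let $R$ be a ring and $n\ge 1$. Then $R$ is almost Armendariz if and only if the upper triangular matrix ring $T_n(R)$ is almost Armendariz.
   Context: All rings are associative with identity. For a ring $R$, $P(R)$ denotes the prime radical of $R$ (the intersection of all prime ideals of $R$, equivalently the set of strongly nilpotent elements of $R$). A ring $R$ is called almost Armendariz if whenever $f(x)=\sum_{i=0}^m a_ix^i$ and $g(x)=\sum_{j=0}^n b_jx^j\in R[x]$ satisfy $f(x)g(x)=0$, then $a_ib_j\in P(R)$ for all $0\le i\le m$, $0\le j\le n$. $T_n(R)$ denotes the ring of $n\times n$ upper triangular matrices over $R$. *)

theory Defs
  imports "HOL-Algebra.UnivPoly" "HOL-Algebra.Ideal_Product"
begin

definition nc_prime_ideal :: "'a set \<Rightarrow> ('a, 'b) ring_scheme \<Rightarrow> bool" where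
  "nc_prime_ideal P R \<longleftrightarrow> ideal P R \<and> P \<noteq> carrier R \<and>
     (\<forall>I J. ideal I R \<longrightarrow> ideal J R \<longrightarrow> ideal_prod R I J \<subseteq> P \<longrightarrow> I \<subseteq> P \<or> J \<subseteq> P)"

text \<open>Prime radical: intersection of all prime ideals (the whole ring if there are none).\<close>
definition prime_radical :: "('a, 'b) ring_scheme \<Rightarrow> 'a set" where
  "prime_radical R = carrier R \<inter> \<Inter> {P. nc_prime_ideal P R}"

definition almost_armendariz :: "('a, 'b) ring_scheme \<Rightarrow> bool" where
  "almost_armendariz R \<longleftrightarrow>
     (\<forall>f \<in> carrier (UP R). \<forall>g \<in> carrier (UP R).
        f \<otimes>\<^bsub>UP R\<^esub> g = \<zero>\<^bsub>UP R\<^esub> \<longrightarrow>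
        (\<forall>i \<le> deg R f. \<forall>j \<le> deg R g.
           coeff (UP R) f i \<otimes>\<^bsub>R\<^esub> coeff (UP R) g j \<in> prime_radical R))"

text \<open>The ring T_n(R) of n x n upper triangular matrices over R, indices 0..n-1;
  matrices are represented as functions nat => nat => 'a which are zero outside
  the upper triangle of the index range.\<close>
definition UT :: "nat \<Rightarrow> ('a, 'b) ring_scheme \<Rightarrow> (nat \<Rightarrow> nat \<Rightarrow> 'a) ring" where
  "UT n R = \<lparr> carrier = {A. (\<forall>i j. A i j \<in> carrier R) \<and>
                               (\<forall>i j. (j < i \<or> n \<le> j) \<longrightarrow> A i j = \<zero>\<^bsub>R\<^esub>)},
             monoid.mult = (\<lambda>A B i j. finsum R (\<lambda>k. A i k \<otimes>\<^bsub>R\<^esub> B k j) {..<n}),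
             one = (\<lambda>i j. if i = j \<and> i < n then \<one>\<^bsub>R\<^esub> else \<zero>\<^bsub>R\<^esub>),
             zero = (\<lambda>i j. \<zero>\<^bsub>R\<^esub>),
             add = (\<lambda>A B i j. A i j \<oplus>\<^bsub>R\<^esub> B i j) \<rparr>"

end

theory Submission
  imports Defs "HOL-Algebra.QuotRing"
begin

text \<open>The diagonal projections A \<mapsto> A_kk are surjective ring homomorphisms T_n(R) \<rightarrow> R, and
  prime ideals pull back to prime ideals along surjections, so the diagonal of a matrix in
  P(T_n(R)) lies in P(R). Conversely, every prime ideal of T_n(R) contains the nilpotent ideal of
  strictly upper triangular matrices and, for r \<in> P(R), the matrix with r at (k,k) and zeros
  elsewhere; hence P(T_n(R)) consists exactly of the matrices whose diagonal lies in P(R).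
  Applying a ring homomorphism coefficientwise preserves products of polynomials, so a relation
  f g = 0 can be pushed along the diagonal projections (R almost Armendariz implies T_n(R) is)
  and along the scalar embedding R \<rightarrow> T_n(R) (the converse).\<close>

lemma (in abelian_monoid) finsum_swap:
  assumes "finite A" "finite B" "\<And>i j. i \<in> A \<Longrightarrow> j \<in> B \<Longrightarrow> f i j \<in> carrier G"
  shows "(\<Oplus>i\<in>A. \<Oplus>j\<in>B. f i j) = (\<Oplus>j\<in>B. \<Oplus>i\<in>A. f i j)"
  using assms
proof (induction A rule: finite_induct)
  case empty
  then show ?case by (simp add: finsum_zero[symmetric] cong: finsum_cong)
next
  case (insert a A)
  have "(\<Oplus>i\<in>insert a A. \<Oplus>j\<in>B. f i j) = (\<Oplus>j\<in>B. f a j) \<oplus> (\<Oplus>i\<in>A. \<Oplus>j\<in>B. f i j)"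
    using insert by (intro finsum_insert) (auto intro!: finsum_closed)
  also have "\<dots> = (\<Oplus>j\<in>B. f a j) \<oplus> (\<Oplus>j\<in>B. \<Oplus>i\<in>A. f i j)"
    using insert by simp
  also have "\<dots> = (\<Oplus>j\<in>B. f a j \<oplus> (\<Oplus>i\<in>A. f i j))"
    using insert by (intro finsum_addf[symmetric]) (auto intro!: finsum_closed)
  also have "\<dots> = (\<Oplus>j\<in>B. \<Oplus>i\<in>insert a A. f i j)"
    using insert by (intro finsum_cong) (auto simp: finsum_insert Pi_def)
  finally show ?case .
qed

lemma (in abelian_monoid) finsum_eq_single:
  assumes "k \<in> K" "finite K" "\<And>l. l \<in> K \<Longrightarrow> l \<noteq> k \<Longrightarrow> f l = \<zero>" "f k \<in> carrier G"
  shows "finsum G f K = f k"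
proof -
  have "finsum G f K = (\<Oplus>l\<in>K. if k = l then f l else \<zero>)"
    using assms by (intro finsum_cong') (auto simp: Pi_def)
  also have "\<dots> = f k"
  proof (rule finsum_singleton)
    show "f \<in> K \<rightarrow> carrier G"
    proof
      fix l assume "l \<in> K" then show "f l \<in> carrier G" using assms by (cases "l = k") auto
    qed
  qed (use assms in auto)
  finally show ?thesis .
qed

context ring begin

lemma idealI_closed:
  assumes "I \<subseteq> carrier R" "\<zero> \<in> I" "\<And>a b. a \<in> I \<Longrightarrow> b \<in> I \<Longrightarrow> a \<oplus> b \<in> I"
    and "\<And>a x. a \<in> I \<Longrightarrow> x \<in> carrier R \<Longrightarrow> x \<otimes> a \<in> I"
    and "\<And>a x. a \<in> I \<Longrightarrow> x \<in> carrier R \<Longrightarrow> a \<otimes> x \<in> I"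
  shows "ideal I R"
proof (rule idealI)
  show "subgroup I (add_monoid R)"
  proof (rule add.subgroupI)
    fix a assume a: "a \<in> I"
    then have "\<ominus> a = \<ominus> \<one> \<otimes> a"
      using assms(1) by (simp add: l_minus subset_iff)
    then show "\<ominus> a \<in> I" using assms(4)[OF a] by simp
  qed (use assms in auto)
qed (use assms ring_axioms in auto)

lemma ideal_prod_subsetI:
  assumes "ideal K R" "\<And>a b. a \<in> I \<Longrightarrow> b \<in> J \<Longrightarrow> a \<otimes> b \<in> K"
  shows "ideal_prod R I J \<subseteq> K"
proof
  fix s assume "s \<in> ideal_prod R I J"
  then show "s \<in> K"
  proof (induction s rule: ideal_prod.induct)
    case (prod i j) then show ?case using assms(2) by blast
  next
    case (sum s1 s2) then show ?case
      using assms(1) by (simp add: additive_subgroup.a_closed ideal.axioms(1))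
  qed
qed

lemma zero_in_prime_radical: "\<zero> \<in> prime_radical R"
  unfolding prime_radical_def nc_prime_ideal_def
  by (auto intro: additive_subgroup.zero_closed ideal.axioms(1))

end

lemma prime_radicalI:
  "x \<in> carrier R \<Longrightarrow> (\<And>P. nc_prime_ideal P R \<Longrightarrow> x \<in> P) \<Longrightarrow> x \<in> prime_radical R"
  unfolding prime_radical_def by blast

lemma prime_radicalD:
  "x \<in> prime_radical R \<Longrightarrow> nc_prime_ideal P R \<Longrightarrow> x \<in> P"
  unfolding prime_radical_def by blast

lemma prime_radical_subset_carrier: "prime_radical R \<subseteq> carrier R"
  unfolding prime_radical_def by blast

lemma (in ring_hom_ring) ideal_image:
  assumes surj: "h ` carrier R = carrier S" and I: "ideal I R"
  shows "ideal (h ` I) S"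
proof (rule idealI)
  show "ring S" ..
  show "subgroup (h ` I) (add_monoid S)"
    by (rule img_is_add_subgroup[OF additive_subgroup.a_subgroup[OF ideal.axioms(1)[OF I]]])
next
  fix a x assume "a \<in> h ` I" "x \<in> carrier S"
  then obtain b y where b: "b \<in> I" "a = h b" and y: "y \<in> carrier R" "x = h y"
    using surj by blast
  have "x \<otimes>\<^bsub>S\<^esub> a = h (y \<otimes> b)" "a \<otimes>\<^bsub>S\<^esub> x = h (b \<otimes> y)"
    using b y ideal.Icarr[OF I b(1)] by simp_all
  then show "x \<otimes>\<^bsub>S\<^esub> a \<in> h ` I" "a \<otimes>\<^bsub>S\<^esub> x \<in> h ` I"
    using ideal.I_l_closed[OF I b(1) y(1)] ideal.I_r_closed[OF I b(1) y(1)] by auto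
qed

lemma (in ring_hom_ring) nc_prime_ideal_vimage:
  assumes surj: "h ` carrier R = carrier S" and P: "nc_prime_ideal P S"
  shows "nc_prime_ideal {r \<in> carrier R. h r \<in> P} R"
  unfolding nc_prime_ideal_def
proof (intro conjI allI impI)
  have PI: "ideal P S" and "P \<noteq> carrier S"
    and prime: "\<And>I J. ideal I S \<Longrightarrow> ideal J S \<Longrightarrow> ideal_prod S I J \<subseteq> P \<Longrightarrow> I \<subseteq> P \<or> J \<subseteq> P"
    using P unfolding nc_prime_ideal_def by blast+
  show "ideal {r \<in> carrier R. h r \<in> P} R" by (rule ideal_vimage[OF PI])
  have "\<one>\<^bsub>S\<^esub> \<notin> P" using \<open>P \<noteq> carrier S\<close> ideal.one_imp_carrier[OF PI] by blast
  then have "\<one> \<notin> {r \<in> carrier R. h r \<in> P}" by simp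
  then show "{r \<in> carrier R. h r \<in> P} \<noteq> carrier R" using R.one_closed by blast
  fix I J assume I: "ideal I R" and J: "ideal J R"
    and IJ: "ideal_prod R I J \<subseteq> {r \<in> carrier R. h r \<in> P}"
  have "ideal_prod S (h ` I) (h ` J) \<subseteq> P"
  proof (rule S.ideal_prod_subsetI[OF PI])
    fix a b assume "a \<in> h ` I" "b \<in> h ` J"
    then obtain x y where "x \<in> I" "y \<in> J" "a = h x" "b = h y" by blast
    then show "a \<otimes>\<^bsub>S\<^esub> b \<in> P"
      using IJ ideal_prod.prod[of x I y J R] ideal.Icarr[OF I] ideal.Icarr[OF J] by auto
  qed
  then have "h ` I \<subseteq> P \<or> h ` J \<subseteq> P"
    using prime ideal_image[OF surj I] ideal_image[OF surj J] by blast
  then show "I \<subseteq> {r \<in> carrier R. h r \<in> P} \<or> J \<subseteq> {r \<in> carrier R. h r \<in> P}"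
    using ideal.Icarr[OF I] ideal.Icarr[OF J] by blast
qed

lemma (in ring_hom_ring) prime_radical_image:
  assumes "h ` carrier R = carrier S" "x \<in> prime_radical R"
  shows "h x \<in> prime_radical S"
proof (rule prime_radicalI)
  show "h x \<in> carrier S"
    using assms(2) prime_radical_subset_carrier[of R] by (intro hom_closed) blast
  fix P assume "nc_prime_ideal P S"
  then have "x \<in> {r \<in> carrier R. h r \<in> P}"
    using prime_radicalD[OF assms(2)] nc_prime_ideal_vimage[OF assms(1)] by blast
  then show "h x \<in> P" by simp
qed

lemma (in ring_hom_ring) up_map_closed:
  assumes "f \<in> up R"
  shows "h \<circ> f \<in> up S"
proof (rule mem_upI)
  show "(h \<circ> f) m \<in> carrier S" for m using assms by (simp add: mem_upD)
  obtain N where "bound \<zero> N f" using assms by blast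
  then have "bound \<zero>\<^bsub>S\<^esub> N (h \<circ> f)" by (auto simp: bound_def)
  then show "\<exists>N. bound \<zero>\<^bsub>S\<^esub> N (h \<circ> f)" ..
qed

lemma (in ring_hom_ring) up_map_mult:
  assumes f: "f \<in> up R" and g: "g \<in> up R"
  shows "h \<circ> (f \<otimes>\<^bsub>UP R\<^esub> g) = (h \<circ> f) \<otimes>\<^bsub>UP S\<^esub> (h \<circ> g)"
proof
  fix m
  have "(h \<circ> (f \<otimes>\<^bsub>UP R\<^esub> g)) m = h (\<Oplus>i\<in>{..m}. f i \<otimes> g (m - i))"
    using f g by (simp add: UP_def)
  also have "\<dots> = (\<Oplus>\<^bsub>S\<^esub>i\<in>{..m}. h (f i) \<otimes>\<^bsub>S\<^esub> h (g (m - i)))"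
    using f g by (simp add: Pi_def mem_upD comp_def)
  also have "\<dots> = ((h \<circ> f) \<otimes>\<^bsub>UP S\<^esub> (h \<circ> g)) m"
    using up_map_closed[OF f] up_map_closed[OF g] by (simp add: UP_def)
  finally show "(h \<circ> (f \<otimes>\<^bsub>UP R\<^esub> g)) m = ((h \<circ> f) \<otimes>\<^bsub>UP S\<^esub> (h \<circ> g)) m" .
qed

lemma (in ring) almost_armendariz_iff:
  "almost_armendariz R \<longleftrightarrow>
     (\<forall>f \<in> up R. \<forall>g \<in> up R. f \<otimes>\<^bsub>UP R\<^esub> g = (\<lambda>_. \<zero>) \<longrightarrow>
        (\<forall>i j. f i \<otimes> g j \<in> prime_radical R))"
proof -
  interpret P: UP_ring R "UP R" by unfold_locales simp
  have coeff_eq: "coeff (UP R) f i = f i" if "f \<in> up R" for f i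
    using that by (simp add: UP_def)
  have outside_deg: "f i \<otimes> g j = \<zero>"
    if "f \<in> up R" "g \<in> up R" "\<not> (i \<le> deg R f \<and> j \<le> deg R g)" for f g i j
  proof -
    have "f i = \<zero> \<or> g j = \<zero>"
      using that P.deg_aboveD[of f i] P.deg_aboveD[of g j] by (auto simp: UP_def not_le)
    then show ?thesis using that(1,2) by (auto simp: mem_upD)
  qed
  show ?thesis
  proof
    assume AA: "almost_armendariz R"
    show "\<forall>f \<in> up R. \<forall>g \<in> up R. f \<otimes>\<^bsub>UP R\<^esub> g = (\<lambda>_. \<zero>) \<longrightarrow>
        (\<forall>i j. f i \<otimes> g j \<in> prime_radical R)"
    proof (intro ballI impI allI)
      fix f g i j assume f: "f \<in> up R" and g: "g \<in> up R" and fg: "f \<otimes>\<^bsub>UP R\<^esub> g = (\<lambda>_. \<zero>)"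
      show "f i \<otimes> g j \<in> prime_radical R"
      proof (cases "i \<le> deg R f \<and> j \<le> deg R g")
        case True
        then show ?thesis
          using AA f g fg unfolding almost_armendariz_def by (auto simp: UP_def coeff_eq)
      next
        case False
        then show ?thesis using outside_deg[OF f g] zero_in_prime_radical by simp
      qed
    qed
  qed (auto simp: almost_armendariz_def UP_def coeff_eq)
qed

lemma (in ring_hom_ring) almost_armendariz_transfer:
  assumes "almost_armendariz S" and f: "f \<in> up R" and g: "g \<in> up R"
    and fg: "f \<otimes>\<^bsub>UP R\<^esub> g = (\<lambda>_. \<zero>)"
  shows "h (f i \<otimes> g j) \<in> prime_radical S"
proof -
  have "(h \<circ> f) \<otimes>\<^bsub>UP S\<^esub> (h \<circ> g) = (\<lambda>_. \<zero>\<^bsub>S\<^esub>)"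
    using up_map_mult[OF f g] fg by (simp add: comp_def)
  then have "(h \<circ> f) i \<otimes>\<^bsub>S\<^esub> (h \<circ> g) j \<in> prime_radical S"
    using assms(1) up_map_closed[OF f] up_map_closed[OF g] S.almost_armendariz_iff by blast
  then show ?thesis using f g by (simp add: mem_upD)
qed

context ring begin

lemma UT_carrier_iff:
  "A \<in> carrier (UT n R) \<longleftrightarrow>
     (\<forall>i j. A i j \<in> carrier R) \<and> (\<forall>i j. (j < i \<or> n \<le> j) \<longrightarrow> A i j = \<zero>)"
  by (simp add: UT_def)

lemma UT_mult_apply: "(A \<otimes>\<^bsub>UT n R\<^esub> B) i j = (\<Oplus>k\<in>{..<n}. A i k \<otimes> B k j)"
  by (simp add: UT_def)

lemma UT_add_apply: "(A \<oplus>\<^bsub>UT n R\<^esub> B) i j = A i j \<oplus> B i j"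
  by (simp add: UT_def)

lemma UT_zero_apply: "\<zero>\<^bsub>UT n R\<^esub> i j = \<zero>"
  by (simp add: UT_def)

lemma UT_one_apply: "\<one>\<^bsub>UT n R\<^esub> i j = (if i = j \<and> i < n then \<one> else \<zero>)"
  by (simp add: UT_def)

lemma UT_entry_closed: "A \<in> carrier (UT n R) \<Longrightarrow> A i j \<in> carrier R"
  by (simp add: UT_def)

lemma UT_below_diag: "A \<in> carrier (UT n R) \<Longrightarrow> j < i \<Longrightarrow> A i j = \<zero>"
  by (simp add: UT_def)

lemma UT_beyond_size: "A \<in> carrier (UT n R) \<Longrightarrow> n \<le> j \<Longrightarrow> A i j = \<zero>"
  by (simp add: UT_def)

lemma UT_mult_closed:
  assumes "A \<in> carrier (UT n R)" "B \<in> carrier (UT n R)"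
  shows "A \<otimes>\<^bsub>UT n R\<^esub> B \<in> carrier (UT n R)"
  unfolding UT_carrier_iff UT_mult_apply
proof (intro conjI allI impI)
  fix i j
  show "(\<Oplus>k\<in>{..<n}. A i k \<otimes> B k j) \<in> carrier R"
    using assms by (intro finsum_closed) (auto simp: UT_entry_closed)
  assume "j < i \<or> n \<le> j"
  then have "A i k \<otimes> B k j = \<zero>" for k
    using assms by (cases "k < i") (auto simp: UT_entry_closed UT_below_diag UT_beyond_size)
  then show "(\<Oplus>k\<in>{..<n}. A i k \<otimes> B k j) = \<zero>"
    by (simp add: add.finprod_one_eqI)
qed

lemma UT_one_closed: "\<one>\<^bsub>UT n R\<^esub> \<in> carrier (UT n R)"
  by (auto simp: UT_def)

lemma UT_zero_closed: "\<zero>\<^bsub>UT n R\<^esub> \<in> carrier (UT n R)"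
  by (auto simp: UT_def)

lemma UT_add_closed:
  "A \<in> carrier (UT n R) \<Longrightarrow> B \<in> carrier (UT n R) \<Longrightarrow> A \<oplus>\<^bsub>UT n R\<^esub> B \<in> carrier (UT n R)"
  by (auto simp: UT_def)

lemma UT_l_one:
  assumes "A \<in> carrier (UT n R)"
  shows "\<one>\<^bsub>UT n R\<^esub> \<otimes>\<^bsub>UT n R\<^esub> A = A"
proof (intro ext)
  fix i j
  show "(\<one>\<^bsub>UT n R\<^esub> \<otimes>\<^bsub>UT n R\<^esub> A) i j = A i j"
  proof (cases "i < n")
    case True
    then show ?thesis
      unfolding UT_mult_apply UT_one_apply
      by (subst finsum_eq_single[of i]) (use assms in \<open>auto simp: UT_entry_closed\<close>)
  next
    case False
    then have "A i j = \<zero>"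
      using assms by (cases "j < i") (auto simp: UT_below_diag UT_beyond_size)
    with False show ?thesis
      using assms unfolding UT_mult_apply UT_one_apply
      by (simp add: add.finprod_one_eqI UT_entry_closed)
  qed
qed

lemma UT_r_one:
  assumes "A \<in> carrier (UT n R)"
  shows "A \<otimes>\<^bsub>UT n R\<^esub> \<one>\<^bsub>UT n R\<^esub> = A"
proof (intro ext)
  fix i j
  show "(A \<otimes>\<^bsub>UT n R\<^esub> \<one>\<^bsub>UT n R\<^esub>) i j = A i j"
  proof (cases "j < n")
    case True
    then show ?thesis
      unfolding UT_mult_apply UT_one_apply
      by (subst finsum_eq_single[of j]) (use assms in \<open>auto simp: UT_entry_closed\<close>)
  next
    case False
    then show ?thesis
      using assms unfolding UT_mult_apply UT_one_apply
      by (simp add: UT_beyond_size) (intro add.finprod_one_eqI, auto simp: UT_entry_closed)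
  qed
qed

lemma UT_m_assoc:
  assumes A: "A \<in> carrier (UT n R)" and B: "B \<in> carrier (UT n R)" and C: "C \<in> carrier (UT n R)"
  shows "(A \<otimes>\<^bsub>UT n R\<^esub> B) \<otimes>\<^bsub>UT n R\<^esub> C = A \<otimes>\<^bsub>UT n R\<^esub> (B \<otimes>\<^bsub>UT n R\<^esub> C)"
proof (intro ext)
  fix i j
  have c: "\<And>i j. A i j \<in> carrier R" "\<And>i j. B i j \<in> carrier R" "\<And>i j. C i j \<in> carrier R"
    using A B C by (auto simp: UT_entry_closed)
  have "((A \<otimes>\<^bsub>UT n R\<^esub> B) \<otimes>\<^bsub>UT n R\<^esub> C) i j = (\<Oplus>l\<in>{..<n}. (\<Oplus>k\<in>{..<n}. A i k \<otimes> B k l) \<otimes> C l j)"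
    by (simp add: UT_mult_apply)
  also have "\<dots> = (\<Oplus>l\<in>{..<n}. \<Oplus>k\<in>{..<n}. A i k \<otimes> B k l \<otimes> C l j)"
    using c by (intro finsum_cong' finsum_ldistr) (auto intro!: finsum_closed)
  also have "\<dots> = (\<Oplus>k\<in>{..<n}. \<Oplus>l\<in>{..<n}. A i k \<otimes> B k l \<otimes> C l j)"
    using c by (intro finsum_swap) auto
  also have "\<dots> = (\<Oplus>k\<in>{..<n}. A i k \<otimes> (\<Oplus>l\<in>{..<n}. B k l \<otimes> C l j))"
    using c by (intro finsum_cong') (auto intro!: finsum_closed simp: finsum_rdistr Pi_def m_assoc)
  also have "\<dots> = (A \<otimes>\<^bsub>UT n R\<^esub> (B \<otimes>\<^bsub>UT n R\<^esub> C)) i j"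
    by (simp add: UT_mult_apply)
  finally show "((A \<otimes>\<^bsub>UT n R\<^esub> B) \<otimes>\<^bsub>UT n R\<^esub> C) i j = (A \<otimes>\<^bsub>UT n R\<^esub> (B \<otimes>\<^bsub>UT n R\<^esub> C)) i j" .
qed

lemma UT_abelian_group: "abelian_group (UT n R)"
proof (rule abelian_groupI)
  fix x y z
  assume x: "x \<in> carrier (UT n R)" and y: "y \<in> carrier (UT n R)" and z: "z \<in> carrier (UT n R)"
  show "x \<oplus>\<^bsub>UT n R\<^esub> y \<oplus>\<^bsub>UT n R\<^esub> z = x \<oplus>\<^bsub>UT n R\<^esub> (y \<oplus>\<^bsub>UT n R\<^esub> z)"
    using x y z by (intro ext) (simp add: UT_add_apply UT_entry_closed a_assoc)
next
  fix x y
  assume x: "x \<in> carrier (UT n R)" and y: "y \<in> carrier (UT n R)"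
  show "x \<oplus>\<^bsub>UT n R\<^esub> y = y \<oplus>\<^bsub>UT n R\<^esub> x"
    using x y by (intro ext) (simp add: UT_add_apply UT_entry_closed a_comm)
next
  fix x assume x: "x \<in> carrier (UT n R)"
  show "\<zero>\<^bsub>UT n R\<^esub> \<oplus>\<^bsub>UT n R\<^esub> x = x"
    using x by (intro ext) (simp add: UT_add_apply UT_zero_apply UT_entry_closed)
  have "(\<lambda>i j. \<ominus> x i j) \<oplus>\<^bsub>UT n R\<^esub> x = \<zero>\<^bsub>UT n R\<^esub>"
    using x by (intro ext) (simp add: UT_add_apply UT_zero_apply UT_entry_closed l_neg)
  moreover have "(\<lambda>i j. \<ominus> x i j) \<in> carrier (UT n R)"
    using x by (auto simp: UT_carrier_iff)
  ultimately show "\<exists>y\<in>carrier (UT n R). y \<oplus>\<^bsub>UT n R\<^esub> x = \<zero>\<^bsub>UT n R\<^esub>" by blast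
qed (simp_all add: UT_add_closed UT_zero_closed)

lemma UT_l_distr:
  assumes x: "x \<in> carrier (UT n R)" and y: "y \<in> carrier (UT n R)" and z: "z \<in> carrier (UT n R)"
  shows "(x \<oplus>\<^bsub>UT n R\<^esub> y) \<otimes>\<^bsub>UT n R\<^esub> z = x \<otimes>\<^bsub>UT n R\<^esub> z \<oplus>\<^bsub>UT n R\<^esub> y \<otimes>\<^bsub>UT n R\<^esub> z"
proof (intro ext)
  fix i j
  have "(\<Oplus>k\<in>{..<n}. (x i k \<oplus> y i k) \<otimes> z k j) = (\<Oplus>k\<in>{..<n}. x i k \<otimes> z k j \<oplus> y i k \<otimes> z k j)"
    using assms by (intro finsum_cong') (auto simp: UT_entry_closed l_distr)
  also have "\<dots> = (\<Oplus>k\<in>{..<n}. x i k \<otimes> z k j) \<oplus> (\<Oplus>k\<in>{..<n}. y i k \<otimes> z k j)"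
    using assms by (intro finsum_addf) (auto simp: UT_entry_closed)
  finally show "((x \<oplus>\<^bsub>UT n R\<^esub> y) \<otimes>\<^bsub>UT n R\<^esub> z) i j = (x \<otimes>\<^bsub>UT n R\<^esub> z \<oplus>\<^bsub>UT n R\<^esub> y \<otimes>\<^bsub>UT n R\<^esub> z) i j"
    by (simp add: UT_mult_apply UT_add_apply)
qed

lemma UT_r_distr:
  assumes x: "x \<in> carrier (UT n R)" and y: "y \<in> carrier (UT n R)" and z: "z \<in> carrier (UT n R)"
  shows "z \<otimes>\<^bsub>UT n R\<^esub> (x \<oplus>\<^bsub>UT n R\<^esub> y) = z \<otimes>\<^bsub>UT n R\<^esub> x \<oplus>\<^bsub>UT n R\<^esub> z \<otimes>\<^bsub>UT n R\<^esub> y"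
proof (intro ext)
  fix i j
  have "(\<Oplus>k\<in>{..<n}. z i k \<otimes> (x k j \<oplus> y k j)) = (\<Oplus>k\<in>{..<n}. z i k \<otimes> x k j \<oplus> z i k \<otimes> y k j)"
    using assms by (intro finsum_cong') (auto simp: UT_entry_closed r_distr)
  also have "\<dots> = (\<Oplus>k\<in>{..<n}. z i k \<otimes> x k j) \<oplus> (\<Oplus>k\<in>{..<n}. z i k \<otimes> y k j)"
    using assms by (intro finsum_addf) (auto simp: UT_entry_closed)
  finally show "(z \<otimes>\<^bsub>UT n R\<^esub> (x \<oplus>\<^bsub>UT n R\<^esub> y)) i j = (z \<otimes>\<^bsub>UT n R\<^esub> x \<oplus>\<^bsub>UT n R\<^esub> z \<otimes>\<^bsub>UT n R\<^esub> y) i j"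
    by (simp add: UT_mult_apply UT_add_apply)
qed

lemma UT_ring: "ring (UT n R)"
proof (rule ringI[OF UT_abelian_group])
  show "monoid (UT n R)"
    by (rule monoidI) (simp_all add: UT_mult_closed UT_one_closed UT_l_one UT_r_one UT_m_assoc)
qed (simp_all add: UT_l_distr UT_r_distr)

end

definition diag_single :: "('a, 'b) ring_scheme \<Rightarrow> nat \<Rightarrow> 'a \<Rightarrow> nat \<Rightarrow> nat \<Rightarrow> 'a" where
  "diag_single R k r = (\<lambda>i j. if i = k \<and> j = k then r else \<zero>\<^bsub>R\<^esub>)"

definition scalar_mat :: "('a, 'b) ring_scheme \<Rightarrow> nat \<Rightarrow> 'a \<Rightarrow> nat \<Rightarrow> nat \<Rightarrow> 'a" where
  "scalar_mat R n r = (\<lambda>i j. if i = j \<and> i < n then r else \<zero>\<^bsub>R\<^esub>)"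

context ring begin

lemma UT_diag_mult:
  assumes "A \<in> carrier (UT n R)" "B \<in> carrier (UT n R)"
  shows "(A \<otimes>\<^bsub>UT n R\<^esub> B) l l = A l l \<otimes> B l l"
proof (cases "l < n")
  case True
  show ?thesis unfolding UT_mult_apply
  proof (rule finsum_eq_single)
    fix k assume "k \<in> {..<n}" "k \<noteq> l"
    then show "A l k \<otimes> B k l = \<zero>"
      by (cases "k < l") (use assms in \<open>simp_all add: UT_entry_closed UT_below_diag\<close>)
  qed (use True assms in \<open>auto simp: UT_entry_closed\<close>)
next
  case False
  then show ?thesis
    using assms UT_mult_closed[OF assms] by (simp add: UT_beyond_size UT_entry_closed)
qed

lemma ring_hom_ring_UT_diag: "k < n \<Longrightarrow> ring_hom_ring (UT n R) R (\<lambda>A. A k k)"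
  by (rule ring_hom_ringI[OF UT_ring ring_axioms])
     (simp_all add: UT_entry_closed UT_diag_mult UT_add_apply UT_one_apply)

lemma diag_single_closed: "k < n \<Longrightarrow> r \<in> carrier R \<Longrightarrow> diag_single R k r \<in> carrier (UT n R)"
  by (auto simp: diag_single_def UT_carrier_iff)

lemma diag_single_zero: "diag_single R k \<zero> = \<zero>\<^bsub>UT n R\<^esub>"
  by (intro ext) (simp add: diag_single_def UT_zero_apply)

lemma diag_single_add:
  "diag_single R k (r \<oplus> s) = diag_single R k r \<oplus>\<^bsub>UT n R\<^esub> diag_single R k s"
  if "r \<in> carrier R" "s \<in> carrier R"
  using that by (intro ext) (simp add: diag_single_def UT_add_apply)

lemma diag_single_mult:
  assumes "k < n" "r \<in> carrier R" "s \<in> carrier R"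
  shows "diag_single R k (r \<otimes> s) = diag_single R k r \<otimes>\<^bsub>UT n R\<^esub> diag_single R k s"
proof (intro ext)
  fix i j
  have "(diag_single R k r \<otimes>\<^bsub>UT n R\<^esub> diag_single R k s) i j
      = diag_single R k r i k \<otimes> diag_single R k s k j"
    unfolding UT_mult_apply
    by (rule finsum_eq_single) (use assms in \<open>auto simp: diag_single_def\<close>)
  then show "diag_single R k (r \<otimes> s) i j = (diag_single R k r \<otimes>\<^bsub>UT n R\<^esub> diag_single R k s) i j"
    using assms by (auto simp: diag_single_def)
qed

lemma UT_diag_surj:
  assumes "k < n"
  shows "(\<lambda>A. A k k) ` carrier (UT n R) = carrier R"
proof
  show "(\<lambda>A. A k k) ` carrier (UT n R) \<subseteq> carrier R" using UT_entry_closed by blast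
  show "carrier R \<subseteq> (\<lambda>A. A k k) ` carrier (UT n R)"
  proof
    fix r assume r: "r \<in> carrier R"
    show "r \<in> (\<lambda>A. A k k) ` carrier (UT n R)"
      by (rule image_eqI[of _ _ "diag_single R k r"])
         (simp add: diag_single_def, rule diag_single_closed[OF assms r])
  qed
qed

lemma UT_diag_in_prime_radical:
  assumes "A \<in> prime_radical (UT n R)" "k < n"
  shows "A k k \<in> prime_radical R"
  using ring_hom_ring.prime_radical_image[OF ring_hom_ring_UT_diag UT_diag_surj assms(1)] assms(2)
  by blast

lemma ring_hom_ring_scalar_mat: "ring_hom_ring R (UT n R) (scalar_mat R n)"
proof (rule ring_hom_ringI[OF ring_axioms UT_ring])
  fix x y assume x: "x \<in> carrier R" and y: "y \<in> carrier R"
  show "scalar_mat R n (x \<otimes> y) = scalar_mat R n x \<otimes>\<^bsub>UT n R\<^esub> scalar_mat R n y"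
  proof (intro ext)
    fix i j
    show "scalar_mat R n (x \<otimes> y) i j = (scalar_mat R n x \<otimes>\<^bsub>UT n R\<^esub> scalar_mat R n y) i j"
    proof (cases "i < n")
      case True
      then show ?thesis
        unfolding UT_mult_apply
        by (subst finsum_eq_single[of i]) (use x y in \<open>auto simp: scalar_mat_def\<close>)
    next
      case False
      then show ?thesis
        unfolding UT_mult_apply using y
        by (auto simp: scalar_mat_def intro!: add.finprod_one_eqI[symmetric])
    qed
  qed
qed (auto simp: scalar_mat_def UT_carrier_iff UT_add_apply UT_one_apply fun_eq_iff)

end

definition UT_superdiag :: "nat \<Rightarrow> ('a, 'b) ring_scheme \<Rightarrow> nat \<Rightarrow> (nat \<Rightarrow> nat \<Rightarrow> 'a) set" where
  "UT_superdiag n R m = {A \<in> carrier (UT n R). \<forall>i j. j < i + m \<longrightarrow> A i j = \<zero>\<^bsub>R\<^esub>}"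

context ring begin

lemma UT_mult_entry_zero:
  assumes "A \<in> carrier (UT n R)" "B \<in> carrier (UT n R)"
    and "\<And>k. k < i + p \<Longrightarrow> A i k = \<zero>" "\<And>k. j < k + q \<Longrightarrow> B k j = \<zero>"
    and "j < i + p + q"
  shows "(A \<otimes>\<^bsub>UT n R\<^esub> B) i j = \<zero>"
  unfolding UT_mult_apply
proof (rule add.finprod_one_eqI)
  fix k
  show "A i k \<otimes> B k j = \<zero>"
    using assms by (cases "k < i + p") (auto simp: UT_entry_closed)
qed

lemma ideal_UT_superdiag: "ideal (UT_superdiag n R m) (UT n R)"
proof -
  interpret U: ring "UT n R" by (rule UT_ring)
  show ?thesis
  proof (rule U.idealI_closed)
    show "UT_superdiag n R m \<subseteq> carrier (UT n R)" unfolding UT_superdiag_def by blast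
    show "\<zero>\<^bsub>UT n R\<^esub> \<in> UT_superdiag n R m" unfolding UT_superdiag_def by (simp add: UT_zero_apply)
  next
    fix a b assume "a \<in> UT_superdiag n R m" "b \<in> UT_superdiag n R m"
    then show "a \<oplus>\<^bsub>UT n R\<^esub> b \<in> UT_superdiag n R m"
      unfolding UT_superdiag_def by (simp add: UT_add_apply)
  next
    fix a x assume a: "a \<in> UT_superdiag n R m" and x: "x \<in> carrier (UT n R)"
    then have a_UT: "a \<in> carrier (UT n R)" and a_zero: "\<And>i j. j < i + m \<Longrightarrow> a i j = \<zero>"
      unfolding UT_superdiag_def by blast+
    show "x \<otimes>\<^bsub>UT n R\<^esub> a \<in> UT_superdiag n R m"
      unfolding UT_superdiag_def
      using UT_mult_entry_zero[OF x a_UT, where p = 0 and q = m] x a_zero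
      by (simp add: UT_below_diag UT_mult_closed a_UT)
    show "a \<otimes>\<^bsub>UT n R\<^esub> x \<in> UT_superdiag n R m"
      unfolding UT_superdiag_def
      using UT_mult_entry_zero[OF a_UT x, where p = m and q = 0] x a_zero
      by (simp add: UT_below_diag UT_mult_closed a_UT)
  qed
qed

lemma UT_superdiag_prod:
  assumes "1 \<le> m"
  shows "ideal_prod (UT n R) (UT_superdiag n R m) (UT_superdiag n R m) \<subseteq> UT_superdiag n R (Suc m)"
proof -
  interpret U: ring "UT n R" by (rule UT_ring)
  show ?thesis
  proof (rule U.ideal_prod_subsetI[OF ideal_UT_superdiag])
    fix a b assume "a \<in> UT_superdiag n R m" "b \<in> UT_superdiag n R m"
    then show "a \<otimes>\<^bsub>UT n R\<^esub> b \<in> UT_superdiag n R (Suc m)"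
      unfolding UT_superdiag_def
      using UT_mult_entry_zero[of a n b _ m _ m] assms by auto
  qed
qed

lemma UT_superdiag_trivial:
  assumes "n \<le> m" "A \<in> UT_superdiag n R m"
  shows "A = \<zero>\<^bsub>UT n R\<^esub>"
proof (intro ext)
  fix i j
  show "A i j = \<zero>\<^bsub>UT n R\<^esub> i j"
    using assms unfolding UT_superdiag_def
    by (cases "j < n") (auto simp: UT_zero_apply UT_beyond_size)
qed

lemma UT_superdiag_subset_prime:
  assumes Q: "nc_prime_ideal Q (UT n R)" and "1 \<le> m"
  shows "UT_superdiag n R m \<subseteq> Q"
  using \<open>1 \<le> m\<close>
proof (induction "n - m" arbitrary: m)
  case 0
  have "\<zero>\<^bsub>UT n R\<^esub> \<in> Q"
    using Q unfolding nc_prime_ideal_def by (blast intro: additive_subgroup.zero_closed ideal.axioms(1))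
  then show ?case using UT_superdiag_trivial[of n m] 0 by auto
next
  case (Suc d)
  then have "UT_superdiag n R (Suc m) \<subseteq> Q" by simp
  then have "ideal_prod (UT n R) (UT_superdiag n R m) (UT_superdiag n R m) \<subseteq> Q"
    using UT_superdiag_prod[OF Suc.prems, of n] by blast
  then show ?case using Q ideal_UT_superdiag unfolding nc_prime_ideal_def by blast
qed

end

definition UT_diag_at :: "nat \<Rightarrow> ('a, 'b) ring_scheme \<Rightarrow> nat \<Rightarrow> 'a set \<Rightarrow> (nat \<Rightarrow> nat \<Rightarrow> 'a) set" where
  "UT_diag_at n R k I =
     {A \<in> carrier (UT n R). A k k \<in> I \<and> (\<forall>l. l \<noteq> k \<longrightarrow> A l l = \<zero>\<^bsub>R\<^esub>)}"

context ring begin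

lemma UT_mem_ideal_of_diag:
  assumes Q: "ideal Q (UT n R)" and strict: "UT_superdiag n R 1 \<subseteq> Q"
    and C: "C \<in> carrier (UT n R)" and diag: "\<And>l. l < n \<Longrightarrow> diag_single R l (C l l) \<in> Q"
  shows "C \<in> Q"
proof -
  define D where "D m = (\<lambda>i j. if i = j \<and> m \<le> i then \<zero> else C i j)" for m
  have D_mem: "D m \<in> Q" if "m \<le> n" for m
    using that
  proof (induction m)
    case 0
    have "D 0 \<in> UT_superdiag n R 1"
      using C unfolding UT_superdiag_def D_def by (auto simp: UT_carrier_iff less_Suc_eq)
    then show ?case using strict by blast
  next
    case (Suc m)
    have "D (Suc m) = D m \<oplus>\<^bsub>UT n R\<^esub> diag_single R m (C m m)"
      using C by (intro ext) (auto simp: D_def diag_single_def UT_add_apply UT_entry_closed)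
    then show ?case
      using Suc diag Q by (simp add: additive_subgroup.a_closed ideal.axioms(1))
  qed
  have "D n = C"
    using C by (intro ext) (auto simp: D_def UT_beyond_size)
  then show ?thesis using D_mem[of n] by simp
qed

lemma ideal_diag_single_vimage:
  assumes Q: "ideal Q (UT n R)" and k: "k < n"
  shows "ideal {r \<in> carrier R. diag_single R k r \<in> Q} R"
proof (rule idealI_closed)
  show "\<zero> \<in> {r \<in> carrier R. diag_single R k r \<in> Q}"
    using Q by (simp add: diag_single_zero[of k n] additive_subgroup.zero_closed ideal.axioms(1))
next
  fix a b assume "a \<in> {r \<in> carrier R. diag_single R k r \<in> Q}" "b \<in> {r \<in> carrier R. diag_single R k r \<in> Q}"
  then show "a \<oplus> b \<in> {r \<in> carrier R. diag_single R k r \<in> Q}"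
    using diag_single_add[of a b k n] Q by (simp add: additive_subgroup.a_closed ideal.axioms(1))
next
  fix a x assume "a \<in> {r \<in> carrier R. diag_single R k r \<in> Q}" and x: "x \<in> carrier R"
  then show "x \<otimes> a \<in> {r \<in> carrier R. diag_single R k r \<in> Q}"
    and "a \<otimes> x \<in> {r \<in> carrier R. diag_single R k r \<in> Q}"
    using diag_single_mult[OF k] ideal.I_l_closed[OF Q] ideal.I_r_closed[OF Q]
      diag_single_closed[OF k x] by auto
qed auto

lemma ideal_UT_diag_at:
  assumes I: "ideal I R"
  shows "ideal (UT_diag_at n R k I) (UT n R)"
proof -
  interpret U: ring "UT n R" by (rule UT_ring)
  show ?thesis
  proof (rule U.idealI_closed)
    show "UT_diag_at n R k I \<subseteq> carrier (UT n R)" unfolding UT_diag_at_def by blast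
    show "\<zero>\<^bsub>UT n R\<^esub> \<in> UT_diag_at n R k I" unfolding UT_diag_at_def
      using I by (simp add: UT_zero_apply additive_subgroup.zero_closed ideal.axioms(1))
  next
    fix a b assume "a \<in> UT_diag_at n R k I" "b \<in> UT_diag_at n R k I"
    then show "a \<oplus>\<^bsub>UT n R\<^esub> b \<in> UT_diag_at n R k I" unfolding UT_diag_at_def
      using I by (simp add: UT_add_apply additive_subgroup.a_closed ideal.axioms(1))
  next
    fix a x assume "a \<in> UT_diag_at n R k I" and x: "x \<in> carrier (UT n R)"
    then have a: "a \<in> carrier (UT n R)" "a k k \<in> I" "\<And>l. l \<noteq> k \<Longrightarrow> a l l = \<zero>"
      unfolding UT_diag_at_def by blast+
    show "x \<otimes>\<^bsub>UT n R\<^esub> a \<in> UT_diag_at n R k I"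
      unfolding UT_diag_at_def
      using UT_mult_closed[OF x a(1)] ideal.I_l_closed[OF I a(2) UT_entry_closed[OF x]]
        a(3) UT_entry_closed[OF x]
      by (simp add: UT_diag_mult[OF x a(1)])
    show "a \<otimes>\<^bsub>UT n R\<^esub> x \<in> UT_diag_at n R k I"
      unfolding UT_diag_at_def
      using UT_mult_closed[OF a(1) x] ideal.I_r_closed[OF I a(2) UT_entry_closed[OF x]]
        a(3) UT_entry_closed[OF x]
      by (simp add: UT_diag_mult[OF a(1) x])
  qed
qed

lemma UT_diag_at_prod_subset:
  assumes Q: "ideal Q (UT n R)" "UT_superdiag n R 1 \<subseteq> Q"
    and IJ: "ideal_prod R I J \<subseteq> {r \<in> carrier R. diag_single R k r \<in> Q}"
  shows "ideal_prod (UT n R) (UT_diag_at n R k I) (UT_diag_at n R k J) \<subseteq> Q"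
proof -
  interpret U: ring "UT n R" by (rule UT_ring)
  show ?thesis
  proof (rule U.ideal_prod_subsetI[OF Q(1)])
    fix a b assume "a \<in> UT_diag_at n R k I" "b \<in> UT_diag_at n R k J"
    then have a: "a \<in> carrier (UT n R)" "a k k \<in> I" "\<And>l. l \<noteq> k \<Longrightarrow> a l l = \<zero>"
      and b: "b \<in> carrier (UT n R)" "b k k \<in> J"
      unfolding UT_diag_at_def by blast+
    have "diag_single R l ((a \<otimes>\<^bsub>UT n R\<^esub> b) l l) \<in> Q" for l
    proof (cases "l = k")
      case True
      then show ?thesis
        using IJ ideal_prod.prod[OF a(2) b(2)] UT_diag_mult[OF a(1) b(1)] by auto
    next
      case False
      then show ?thesis
        using UT_diag_mult[OF a(1) b(1)] a(3) UT_entry_closed[OF b(1)] Q(1)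
        by (simp add: diag_single_zero[of l n] additive_subgroup.zero_closed ideal.axioms(1))
    qed
    then show "a \<otimes>\<^bsub>UT n R\<^esub> b \<in> Q"
      using UT_mem_ideal_of_diag[OF Q UT_mult_closed[OF a(1) b(1)]] by blast
  qed
qed

lemma nc_prime_ideal_diag_single_vimage:
  assumes Q: "nc_prime_ideal Q (UT n R)" and k: "k < n"
    and proper: "{r \<in> carrier R. diag_single R k r \<in> Q} \<noteq> carrier R"
  shows "nc_prime_ideal {r \<in> carrier R. diag_single R k r \<in> Q} R"
  unfolding nc_prime_ideal_def
proof (intro conjI allI impI proper)
  have QI: "ideal Q (UT n R)"
    and prime: "\<And>I J. ideal I (UT n R) \<Longrightarrow> ideal J (UT n R) \<Longrightarrow>
                  ideal_prod (UT n R) I J \<subseteq> Q \<Longrightarrow> I \<subseteq> Q \<or> J \<subseteq> Q"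
    using Q unfolding nc_prime_ideal_def by blast+
  show "ideal {r \<in> carrier R. diag_single R k r \<in> Q} R"
    by (rule ideal_diag_single_vimage[OF QI k])
  fix I J assume I: "ideal I R" and J: "ideal J R"
    and IJ: "ideal_prod R I J \<subseteq> {r \<in> carrier R. diag_single R k r \<in> Q}"
  have vimage_of_diag_at: "K \<subseteq> {r \<in> carrier R. diag_single R k r \<in> Q}"
    if "ideal K R" "UT_diag_at n R k K \<subseteq> Q" for K
  proof
    fix x assume x: "x \<in> K"
    then have "x \<in> carrier R" using ideal.Icarr[OF that(1)] by blast
    moreover have "diag_single R k x \<in> UT_diag_at n R k K"
      unfolding UT_diag_at_def using diag_single_closed[OF k \<open>x \<in> carrier R\<close>] x
      by (auto simp: diag_single_def)
    ultimately show "x \<in> {r \<in> carrier R. diag_single R k r \<in> Q}" using that(2) by blast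
  qed
  have "UT_diag_at n R k I \<subseteq> Q \<or> UT_diag_at n R k J \<subseteq> Q"
    using prime ideal_UT_diag_at[OF I] ideal_UT_diag_at[OF J]
      UT_diag_at_prod_subset[OF QI UT_superdiag_subset_prime[OF Q le_refl] IJ] by simp
  then show "I \<subseteq> {r \<in> carrier R. diag_single R k r \<in> Q} \<or>
             J \<subseteq> {r \<in> carrier R. diag_single R k r \<in> Q}"
    using vimage_of_diag_at[OF I] vimage_of_diag_at[OF J] by (elim disjE) simp_all
qed

lemma diag_single_mem_prime:
  assumes Q: "nc_prime_ideal Q (UT n R)" and k: "k < n" and r: "r \<in> prime_radical R"
  shows "diag_single R k r \<in> Q"
proof (cases "{x \<in> carrier R. diag_single R k x \<in> Q} = carrier R")
  case True
  have "r \<in> carrier R" using r prime_radical_subset_carrier[of R] by blast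
  then have "r \<in> {x \<in> carrier R. diag_single R k x \<in> Q}" by (simp only: True)
  then show ?thesis by simp
next
  case False
  have "r \<in> {x \<in> carrier R. diag_single R k x \<in> Q}"
    by (rule prime_radicalD[OF r nc_prime_ideal_diag_single_vimage[OF Q k False]])
  then show ?thesis by simp
qed

lemma UT_prime_radical_iff:
  "A \<in> prime_radical (UT n R) \<longleftrightarrow>
     A \<in> carrier (UT n R) \<and> (\<forall>k < n. A k k \<in> prime_radical R)"
proof
  assume A: "A \<in> carrier (UT n R) \<and> (\<forall>k < n. A k k \<in> prime_radical R)"
  show "A \<in> prime_radical (UT n R)"
  proof (rule prime_radicalI)
    show "A \<in> carrier (UT n R)" using A by (rule conjunct1)
    fix Q assume Q: "nc_prime_ideal Q (UT n R)"
    then have QI: "ideal Q (UT n R)" unfolding nc_prime_ideal_def by blast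
    show "A \<in> Q"
    proof (rule UT_mem_ideal_of_diag[OF QI UT_superdiag_subset_prime[OF Q le_refl]])
      show "A \<in> carrier (UT n R)" using A by (rule conjunct1)
      fix l assume "l < n"
      then show "diag_single R l (A l l) \<in> Q"
        using A diag_single_mem_prime[OF Q] by simp
    qed
  qed
next
  assume A: "A \<in> prime_radical (UT n R)"
  then show "A \<in> carrier (UT n R) \<and> (\<forall>k < n. A k k \<in> prime_radical R)"
    using prime_radical_subset_carrier[of "UT n R"] UT_diag_in_prime_radical[OF A] by blast
qed

end

context ring begin

lemma almost_armendariz_UT:
  assumes "almost_armendariz R"
  shows "almost_armendariz (UT n R)"
proof -
  interpret U: ring "UT n R" by (rule UT_ring)
  show ?thesis unfolding U.almost_armendariz_iff
  proof (intro ballI impI allI)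
    fix F G i j assume F: "F \<in> up (UT n R)" and G: "G \<in> up (UT n R)"
      and FG: "F \<otimes>\<^bsub>UP (UT n R)\<^esub> G = (\<lambda>_. \<zero>\<^bsub>UT n R\<^esub>)"
    have "(F i \<otimes>\<^bsub>UT n R\<^esub> G j) k k \<in> prime_radical R" if "k < n" for k
      by (rule ring_hom_ring.almost_armendariz_transfer[OF ring_hom_ring_UT_diag[OF that] assms F G FG])
    then show "F i \<otimes>\<^bsub>UT n R\<^esub> G j \<in> prime_radical (UT n R)"
      using F G by (simp add: UT_prime_radical_iff mem_upD)
  qed
qed

lemma almost_armendariz_of_UT:
  assumes "almost_armendariz (UT n R)" and "0 < n"
  shows "almost_armendariz R"
  unfolding almost_armendariz_iff
proof (intro ballI impI allI)
  fix f g i j assume f: "f \<in> up R" and g: "g \<in> up R" and fg: "f \<otimes>\<^bsub>UP R\<^esub> g = (\<lambda>_. \<zero>)"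
  have "scalar_mat R n (f i \<otimes> g j) \<in> prime_radical (UT n R)"
    by (rule ring_hom_ring.almost_armendariz_transfer[OF ring_hom_ring_scalar_mat assms(1) f g fg])
  then have "scalar_mat R n (f i \<otimes> g j) 0 0 \<in> prime_radical R"
    using assms(2) by (simp add: UT_prime_radical_iff)
  then show "f i \<otimes> g j \<in> prime_radical R"
    using assms(2) by (simp add: scalar_mat_def)
qed

end

theorem proposition2p1:
  fixes R :: "('a, 'b) ring_scheme" and n :: nat
  assumes "ring R" and "n \<ge> 1"
  shows "almost_armendariz R \<longleftrightarrow> almost_armendariz (UT n R)"
  using ring.almost_armendariz_UT[OF assms(1)] ring.almost_armendariz_of_UT[OF assms(1)] assms(2)
  by auto

end
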